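(* Suppose the background potential $V(w)=\sum_{k\ge1}\frac{\overline{V_k^{\mathrm{out}}}w^{-k}}{k}+\sum_{k\ge1}\frac{V_k^{\mathrm{in}}w^k}{k}$ is analytic in an open neighborhood of the unit circle $\mathbb{T}$. Then the Stanley–Cauchy kernel $\Pi=\Pi(\overline{V^{\mathrm{out}}},V^{\mathrm{in}}\,|\,\tfrac{1}{-\varepsilon_1\varepsilon_2})=\prod_{k\ge1}\exp\big(\frac{\overline{V_k^{\mathrm{out}}}V_k^{\mathrm{in}}}{-\varepsilon_1\varepsilon_2k}\big)$, regarded as a function of the variables $\overline{V^{\mathrm{out}}_k}$ with $V^{\mathrm{in}}_k$ fixed, lies in the domain of definition of the operator $\langle0|\mathcal{L}^{\mathrm{out}}(\varepsilon_2,\varepsilon_1)^\ell|0\rangle$ for every $\ell\in\mathbb{N}$.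
   Context: Fix real $\varepsilon_2<0<\varepsilon_1$. On $\overline{\mathcal{F}^{\mathrm{out}}}=\mathbb{C}[\overline{V_1^{\mathrm{out}}},\overline{V_2^{\mathrm{out}}},\dots]$ (and its Hilbert space completion for the inner product in which multiplication by $\overline{V_k^{\mathrm{out}}}$ has adjoint $\overline{V_{-k}^{\mathrm{out}}}:=(-\varepsilon_1\varepsilon_2)k\,\partial/\partial\overline{V_k^{\mathrm{out}}}$, with $\overline{V_0^{\mathrm{out}}}=0$), define $\mathcal{L}^{\mathrm{out}}_{h_+,h_-}=\overline{V^{\mathrm{out}}_{h_--h_+}}+(\varepsilon_1+\varepsilon_2)h_+\delta_{h_+h_-}$ for $h_\pm\in\mathbb{N}$ and $\langle0|\mathcal{L}^{\mathrm{out}}(\varepsilon_2,\varepsilon_1)^\ell|0\rangle=\sum_{h_1,\dots,h_{\ell-1}\ge0}\mathcal{L}^{\mathrm{out}}_{0,h_1}\mathcal{L}^{\mathrm{out}}_{h_1,h_2}\cdots\mathcal{L}^{\mathrm{out}}_{h_{\ell-1},0}$ (the vacuum matrix element of the $\ell$-th power of the Nazarov–Sklyanin Lax operator). Being in the domain means the resulting series applied to $\Pi$ converges in the Hilbert space completion. *)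

theory Defs
  imports "HOL-Analysis.Analysis"
begin

(* Fock space F^out = C[x_1, x_2, ...] with x_k = conj(V_k^out).
   A (formal) element is given by its coefficient function on monomials
   x^m = prod_k x_k^(m k), m finitely supported with m 0 = 0.
   hb = -eps1*eps2 > 0. *)

type_synonym fock = "(nat \<Rightarrow> nat) \<Rightarrow> complex"

definition fock_idx :: "(nat \<Rightarrow> nat) set" where
  "fock_idx = {m. finite {k. m k \<noteq> 0} \<and> m 0 = 0}"

(* squared norm of the monomial x^m: multiplication by x_k has adjoint hb*k*d/dx_k *)
definition fock_wt :: "real \<Rightarrow> (nat \<Rightarrow> nat) \<Rightarrow> real" where
  "fock_wt hb m = (\<Prod>k\<in>{k. m k \<noteq> 0}. (hb * real k) ^ (m k) * fact (m k))"

definition in_fock :: "real \<Rightarrow> fock \<Rightarrow> bool" where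
  "in_fock hb c \<longleftrightarrow> (\<lambda>m. (cmod (c m))\<^sup>2 * fock_wt hb m) summable_on fock_idx"

definition fock_norm :: "real \<Rightarrow> fock \<Rightarrow> real" where
  "fock_norm hb c = sqrt (infsum (\<lambda>m. (cmod (c m))\<^sup>2 * fock_wt hb m) fock_idx)"

definition fock_has_sum :: "real \<Rightarrow> ('i \<Rightarrow> fock) \<Rightarrow> 'i set \<Rightarrow> fock \<Rightarrow> bool" where
  "fock_has_sum hb f I S \<longleftrightarrow> in_fock hb S \<and> (\<forall>i\<in>I. in_fock hb (f i)) \<and>
     (\<forall>e>0. \<exists>F0. finite F0 \<and> F0 \<subseteq> I \<and>
        (\<forall>F. finite F \<and> F0 \<subseteq> F \<and> F \<subseteq> I \<longrightarrow>
              fock_norm hb (\<lambda>m. S m - (\<Sum>i\<in>F. f i m)) < e))"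

(* multiplication by x_n *)
definition fock_raise :: "nat \<Rightarrow> fock \<Rightarrow> fock" where
  "fock_raise n c = (\<lambda>m. if 0 < m n then c (m(n := m n - 1)) else 0)"

(* hb * n * d/dx_n *)
definition fock_lower :: "real \<Rightarrow> nat \<Rightarrow> fock \<Rightarrow> fock" where
  "fock_lower hb n c = (\<lambda>m. complex_of_real (hb * real n * real (m n + 1)) * c (m(n := m n + 1)))"

(* conj(V_j^out) for j in Z: j>0 multiplication, j<0 adjoint, j=0 zero *)
definition Vbar_out :: "real \<Rightarrow> int \<Rightarrow> fock \<Rightarrow> fock" where
  "Vbar_out hb j c = (if 0 < j then fock_raise (nat j) c
                      else if j < 0 then fock_lower hb (nat (- j)) c
                      else (\<lambda>_. 0))"

definition L_out :: "real \<Rightarrow> real \<Rightarrow> nat \<Rightarrow> nat \<Rightarrow> fock \<Rightarrow> fock" where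
  "L_out e1 e2 h h' c = (\<lambda>m. Vbar_out (- e1 * e2) (int h' - int h) c m
       + (if h = h' then complex_of_real ((e1 + e2) * real h) * c m else 0))"

fun lax_chain :: "real \<Rightarrow> real \<Rightarrow> nat list \<Rightarrow> fock \<Rightarrow> fock" where
  "lax_chain e1 e2 (a # b # rest) c = L_out e1 e2 a b (lax_chain e1 e2 (b # rest) c)"
| "lax_chain e1 e2 xs c = c"

(* the term indexed by (h_1,...,h_{l-1}); for l = 0 the operator is the identity *)
definition vac_term :: "real \<Rightarrow> real \<Rightarrow> nat \<Rightarrow> nat list \<Rightarrow> fock \<Rightarrow> fock" where
  "vac_term e1 e2 l hs c = (if l = 0 then c else lax_chain e1 e2 (0 # hs @ [0]) c)"

(* c lies in the domain of <0| L^out(e2,e1)^l |0> *)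
definition in_vac_domain :: "real \<Rightarrow> real \<Rightarrow> nat \<Rightarrow> fock \<Rightarrow> bool" where
  "in_vac_domain e1 e2 l c \<longleftrightarrow> in_fock (- e1 * e2) c \<and>
     (\<exists>S. fock_has_sum (- e1 * e2) (\<lambda>hs. vac_term e1 e2 l hs c) {hs. length hs = l - 1} S)"

(* Stanley-Cauchy kernel prod_k exp(x_k y_k / (hb k)), expanded in monomials x^m *)
definition stanley_cauchy :: "real \<Rightarrow> (nat \<Rightarrow> complex) \<Rightarrow> fock" where
  "stanley_cauchy hb vin m = (\<Prod>k\<in>{k. m k \<noteq> 0}.
       (vin k / complex_of_real (hb * real k)) ^ (m k) / of_nat (fact (m k)))"

definition potential :: "(nat \<Rightarrow> complex) \<Rightarrow> (nat \<Rightarrow> complex) \<Rightarrow> complex \<Rightarrow> complex" where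
  "potential vout vin w =
     (\<Sum>k. vout (Suc k) * inverse w ^ Suc k / of_nat (Suc k))
   + (\<Sum>k. vin (Suc k) * w ^ Suc k / of_nat (Suc k))"

end

theory Submission
  imports Defs
begin

(* Write hb = -e1 e2 and grade x^m = sum_k k m_k.  Convergence of the V^in series at a real point
   R > 1 gives |V_k^in| <= C k R^-k, so Pi has finite norm even for the weight R^grade: its squared
   weighted norm is at most exp (sum_k |V_k^in|^2 R^k / (hb k)).  Each entry L_{a,b} multiplies a
   coefficient of grade N by at most a constant times (N + a + 1)^2, so a path 0, h_1, ..., h_{l-1}, 0
   costs a factor polynomial in the grade, which the exponential weight absorbs.  Moreover the image
   of Pi along such a path vanishes below grade max h_i, so the squared norm of the h-term is
   O(R^(-max h_i / 2)), which is summable over all paths: the series for <0|L^l|0> Pi converges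
   absolutely in the Fock space. *)

section \<open>Weighted norm bounds\<close>

(* Bounding the finite partial sums avoids carrying summability along. *)
definition fock_weighted_le :: "real \<Rightarrow> ((nat \<Rightarrow> nat) \<Rightarrow> real) \<Rightarrow> fock \<Rightarrow> real \<Rightarrow> bool" where
  "fock_weighted_le hb w c B \<longleftrightarrow>
     (\<forall>A. finite A \<and> A \<subseteq> fock_idx \<longrightarrow> (\<Sum>m\<in>A. (cmod (c m))\<^sup>2 * fock_wt hb m * w m) \<le> B)"

lemma fock_wt_nonneg: "0 < hb \<Longrightarrow> 0 \<le> fock_wt hb m"
  unfolding fock_wt_def by (intro prod_nonneg) auto

lemma fock_wt_pos:
  assumes "0 < hb" "m \<in> fock_idx"
  shows "0 < fock_wt hb m"
proof -
  have "0 < k" if "m k \<noteq> 0" for k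
    using that assms(2) by (cases k) (auto simp: fock_idx_def)
  then show ?thesis
    unfolding fock_wt_def using assms(1) by (intro prod_pos) auto
qed

lemma fock_weighted_le_nonneg: "fock_weighted_le hb w c B \<Longrightarrow> 0 \<le> B"
  unfolding fock_weighted_le_def by (metis empty_subsetI finite.emptyI sum.empty)

lemma fock_weighted_le_mono: "fock_weighted_le hb w c B \<Longrightarrow> B \<le> B' \<Longrightarrow> fock_weighted_le hb w c B'"
  unfolding fock_weighted_le_def by (meson order_trans)

lemma fock_weighted_le_reweight:
  assumes hb: "0 < hb" and c: "fock_weighted_le hb w c B" and C: "0 \<le> C"
    and w': "\<And>m. m \<in> fock_idx \<Longrightarrow> c m \<noteq> 0 \<Longrightarrow> w' m \<le> C * w m"
  shows "fock_weighted_le hb w' c (C * B)"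
  unfolding fock_weighted_le_def
proof (intro allI impI)
  fix A assume A: "finite A \<and> A \<subseteq> fock_idx"
  have "(\<Sum>m\<in>A. (cmod (c m))\<^sup>2 * fock_wt hb m * w' m) \<le> (\<Sum>m\<in>A. C * ((cmod (c m))\<^sup>2 * fock_wt hb m * w m))"
  proof (rule sum_mono)
    fix m assume m: "m \<in> A"
    show "(cmod (c m))\<^sup>2 * fock_wt hb m * w' m \<le> C * ((cmod (c m))\<^sup>2 * fock_wt hb m * w m)"
    proof (cases "c m = 0")
      case False
      then have "(cmod (c m))\<^sup>2 * fock_wt hb m * w' m \<le> (cmod (c m))\<^sup>2 * fock_wt hb m * (C * w m)"
        using m A w' fock_wt_nonneg[OF hb] by (intro mult_left_mono) auto
      then show ?thesis by (simp add: algebra_simps)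
    qed simp
  qed
  also have "\<dots> \<le> C * B"
    using c A C unfolding fock_weighted_le_def by (simp add: sum_distrib_left[symmetric] mult_left_mono)
  finally show "(\<Sum>m\<in>A. (cmod (c m))\<^sup>2 * fock_wt hb m * w' m) \<le> C * B" .
qed

lemma in_fock_if_weighted_le:
  assumes "0 < hb" "fock_weighted_le hb (\<lambda>_. 1) c B"
  shows "in_fock hb c"
  unfolding in_fock_def
proof (rule nonneg_bdd_above_summable_on)
  show "bdd_above (sum (\<lambda>m. (cmod (c m))\<^sup>2 * fock_wt hb m) ` {A. A \<subseteq> fock_idx \<and> finite A})"
    using assms(2) unfolding fock_weighted_le_def by (intro bdd_aboveI[of _ B]) auto
qed (use fock_wt_nonneg[OF assms(1)] in simp)

lemma fock_norm_le_if_weighted_le: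
  assumes "0 < hb" "fock_weighted_le hb (\<lambda>_. 1) c B"
  shows "fock_norm hb c \<le> sqrt B"
  unfolding fock_norm_def
proof (rule real_sqrt_le_mono, rule infsum_le_finite_sums)
  show "(\<lambda>m. (cmod (c m))\<^sup>2 * fock_wt hb m) summable_on fock_idx"
    using in_fock_if_weighted_le[OF assms] unfolding in_fock_def .
qed (use assms(2) in \<open>auto simp: fock_weighted_le_def\<close>)

lemma norm_coeff_le_if_weighted_le:
  assumes hb: "0 < hb" and c: "fock_weighted_le hb (\<lambda>_. 1) c (B\<^sup>2)" and B: "0 \<le> B"
    and m: "m \<in> fock_idx"
  shows "cmod (c m) \<le> B / sqrt (fock_wt hb m)"
proof -
  have "(cmod (c m) * sqrt (fock_wt hb m))\<^sup>2 \<le> B\<^sup>2"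
    using c m fock_wt_nonneg[OF hb, of m]
    unfolding fock_weighted_le_def by (auto simp: power_mult_distrib dest: spec[of _ "{m}"])
  then have "cmod (c m) * sqrt (fock_wt hb m) \<le> B"
    using B by (rule power2_le_imp_le)
  then show ?thesis
    using fock_wt_pos[OF hb m] by (simp add: pos_le_divide_eq)
qed

lemma L2_set_sum_le: "L2_set (\<lambda>x. \<Sum>i\<in>G. f i x) A \<le> (\<Sum>i\<in>G. L2_set (f i) A)"
proof (induction G rule: infinite_finite_induct)
  case (insert j G)
  have "L2_set (\<lambda>x. \<Sum>i\<in>insert j G. f i x) A = L2_set (\<lambda>x. f j x + (\<Sum>i\<in>G. f i x)) A"
    using insert by simp
  also have "\<dots> \<le> L2_set (f j) A + L2_set (\<lambda>x. \<Sum>i\<in>G. f i x) A"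
    by (rule L2_set_triangle_ineq)
  also have "\<dots> \<le> (\<Sum>i\<in>insert j G. L2_set (f i) A)"
    using insert by simp
  finally show ?case .
qed (simp_all add: L2_set_def)

lemma weighted_sum_eq_L2_set:
  assumes "\<And>m. 0 \<le> v m"
  shows "(\<Sum>m\<in>A. (cmod (c m))\<^sup>2 * v m) = (L2_set (\<lambda>m. cmod (c m) * sqrt (v m)) A)\<^sup>2"
  unfolding L2_set_def using assms by (simp add: sum_nonneg power_mult_distrib)

lemma fock_weighted_le_sum:
  assumes hb: "0 < hb" and w: "\<And>m. 0 \<le> w m" and b: "\<And>i. i \<in> G \<Longrightarrow> 0 \<le> b i"
    and f: "\<And>i. i \<in> G \<Longrightarrow> fock_weighted_le hb w (f i) ((b i)\<^sup>2)"
  shows "fock_weighted_le hb w (\<lambda>m. \<Sum>i\<in>G. f i m) ((\<Sum>i\<in>G. b i)\<^sup>2)"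
  unfolding fock_weighted_le_def
proof (intro allI impI)
  fix A assume A: "finite A \<and> A \<subseteq> fock_idx"
  define v where "v m = fock_wt hb m * w m" for m
  have v: "0 \<le> v m" for m
    unfolding v_def using fock_wt_nonneg[OF hb] w by simp
  let ?g = "\<lambda>i m. cmod (f i m) * sqrt (v m)"
  have "L2_set (\<lambda>m. cmod (\<Sum>i\<in>G. f i m) * sqrt (v m)) A \<le> L2_set (\<lambda>m. \<Sum>i\<in>G. ?g i m) A"
    by (rule L2_set_mono)
       (auto simp: v sum_distrib_right[symmetric] intro!: mult_right_mono norm_sum)
  also have "\<dots> \<le> (\<Sum>i\<in>G. L2_set (?g i) A)"
    by (rule L2_set_sum_le)
  also have "\<dots> \<le> (\<Sum>i\<in>G. b i)"
  proof (rule sum_mono)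
    fix i assume i: "i \<in> G"
    have "(\<Sum>m\<in>A. (cmod (f i m))\<^sup>2 * fock_wt hb m * w m) \<le> (b i)\<^sup>2"
      using f[OF i] A unfolding fock_weighted_le_def by blast
    then have "(L2_set (?g i) A)\<^sup>2 \<le> (b i)\<^sup>2"
      using weighted_sum_eq_L2_set[where v=v and A=A and c="f i", OF v]
      unfolding v_def by (simp add: mult.assoc)
    then show "L2_set (?g i) A \<le> b i"
      using b[OF i] by (rule power2_le_imp_le)
  qed
  finally have "(L2_set (\<lambda>m. cmod (\<Sum>i\<in>G. f i m) * sqrt (v m)) A)\<^sup>2 \<le> (\<Sum>i\<in>G. b i)\<^sup>2"
    by (intro power_mono) auto
  then show "(\<Sum>m\<in>A. (cmod (\<Sum>i\<in>G. f i m))\<^sup>2 * fock_wt hb m * w m) \<le> (\<Sum>i\<in>G. b i)\<^sup>2"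
    using weighted_sum_eq_L2_set[where v=v and A=A, OF v] unfolding v_def by (simp add: mult.assoc)
qed

lemma fock_weighted_le_cong:
  assumes "\<And>m. m \<in> fock_idx \<Longrightarrow> c m = c' m"
  shows "fock_weighted_le hb w c B \<longleftrightarrow> fock_weighted_le hb w c' B"
proof -
  have "(\<Sum>m\<in>A. (cmod (c m))\<^sup>2 * fock_wt hb m * w m) = (\<Sum>m\<in>A. (cmod (c' m))\<^sup>2 * fock_wt hb m * w m)"
    if "A \<subseteq> fock_idx" for A
    using that assms by (intro sum.cong) auto
  then show ?thesis
    unfolding fock_weighted_le_def by auto
qed

lemma fock_coeff_summable_on:
  assumes hb: "0 < hb" and b: "b summable_on I" "\<And>i. i \<in> I \<Longrightarrow> 0 \<le> b i"
    and f: "\<And>i. i \<in> I \<Longrightarrow> fock_weighted_le hb (\<lambda>_. 1) (f i) ((b i)\<^sup>2)"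
    and m: "m \<in> fock_idx"
  shows "(\<lambda>i. f i m) summable_on I"
proof -
  have "(\<lambda>i. norm (f i m)) summable_on I"
  proof (rule summable_on_comparison_test)
    show "(\<lambda>i. b i * (1 / sqrt (fock_wt hb m))) summable_on I"
      using b(1) by (rule summable_on_cmult_left)
    show "norm (f i m) \<le> b i * (1 / sqrt (fock_wt hb m))" if "i \<in> I" for i
      using norm_coeff_le_if_weighted_le[OF hb f b(2) m] that by simp
  qed simp
  then show ?thesis
    by (rule abs_summable_summable)
qed

lemma fock_weighted_le_infsum:
  assumes hb: "0 < hb" and w: "\<And>m. 0 \<le> w m"
    and b: "b summable_on G" "\<And>i. i \<in> G \<Longrightarrow> 0 \<le> b i"
    and f: "\<And>i. i \<in> G \<Longrightarrow> fock_weighted_le hb w (f i) ((b i)\<^sup>2)"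
    and f_summable: "\<And>m. m \<in> fock_idx \<Longrightarrow> (\<lambda>i. f i m) summable_on G"
  shows "fock_weighted_le hb w (\<lambda>m. \<Sum>\<^sub>\<infinity>i\<in>G. f i m) ((\<Sum>\<^sub>\<infinity>i\<in>G. b i)\<^sup>2)"
  unfolding fock_weighted_le_def
proof (intro allI impI)
  fix A assume A: "finite A \<and> A \<subseteq> fock_idx"
  let ?\<phi> = "\<lambda>c. \<Sum>m\<in>A. (cmod (c m))\<^sup>2 * fock_wt hb m * w m"
  have "((\<lambda>F. ?\<phi> (\<lambda>m. \<Sum>i\<in>F. f i m)) \<longlongrightarrow> ?\<phi> (\<lambda>m. \<Sum>\<^sub>\<infinity>i\<in>G. f i m)) (finite_subsets_at_top G)"
  proof (intro tendsto_sum tendsto_mult_right tendsto_power tendsto_norm)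
    fix m assume "m \<in> A"
    then have "((\<lambda>i. f i m) has_sum (\<Sum>\<^sub>\<infinity>i\<in>G. f i m)) G"
      using A f_summable by auto
    then show "((\<lambda>F. \<Sum>i\<in>F. f i m) \<longlongrightarrow> (\<Sum>\<^sub>\<infinity>i\<in>G. f i m)) (finite_subsets_at_top G)"
      unfolding has_sum_def .
  qed
  moreover have "\<forall>\<^sub>F F in finite_subsets_at_top G. ?\<phi> (\<lambda>m. \<Sum>i\<in>F. f i m) \<le> (\<Sum>\<^sub>\<infinity>i\<in>G. b i)\<^sup>2"
  proof (rule eventually_finite_subsets_at_top_weakI)
    fix F assume F: "finite F" "F \<subseteq> G"
    have "fock_weighted_le hb w (\<lambda>m. \<Sum>i\<in>F. f i m) ((\<Sum>i\<in>F. b i)\<^sup>2)"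
      using F by (intro fock_weighted_le_sum[OF hb w]) (auto intro: b(2) f)
    then have "?\<phi> (\<lambda>m. \<Sum>i\<in>F. f i m) \<le> (\<Sum>i\<in>F. b i)\<^sup>2"
      using A unfolding fock_weighted_le_def by blast
    also have "\<dots> \<le> (\<Sum>\<^sub>\<infinity>i\<in>G. b i)\<^sup>2"
      using F b by (intro power_mono finite_sum_le_infsum sum_nonneg) auto
    finally show "?\<phi> (\<lambda>m. \<Sum>i\<in>F. f i m) \<le> (\<Sum>\<^sub>\<infinity>i\<in>G. b i)\<^sup>2" .
  qed
  ultimately show "?\<phi> (\<lambda>m. \<Sum>\<^sub>\<infinity>i\<in>G. f i m) \<le> (\<Sum>\<^sub>\<infinity>i\<in>G. b i)\<^sup>2"
    by (rule tendsto_upperbound) simp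
qed

lemma infsum_split_finite:
  fixes f :: "'i \<Rightarrow> 'a::banach"
  assumes "f summable_on I" "finite F" "F \<subseteq> I"
  shows "(\<Sum>\<^sub>\<infinity>i\<in>I. f i) = (\<Sum>i\<in>F. f i) + (\<Sum>\<^sub>\<infinity>i\<in>I - F. f i)"
proof -
  have "f summable_on (I - F)"
    using assms(1) by (rule summable_on_subset_banach) blast
  then have "(\<Sum>\<^sub>\<infinity>i\<in>F \<union> (I - F). f i) = (\<Sum>\<^sub>\<infinity>i\<in>F. f i) + (\<Sum>\<^sub>\<infinity>i\<in>I - F. f i)"
    using assms(2) by (intro infsum_Un_disjoint) auto
  then show ?thesis
    using assms(2,3) by (simp add: Un_absorb1)
qed

lemma infsum_tail_less:
  fixes b :: "'i \<Rightarrow> real"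
  assumes "b summable_on I" "0 < e"
  shows "\<exists>F0. finite F0 \<and> F0 \<subseteq> I \<and> (\<forall>F. finite F \<and> F0 \<subseteq> F \<and> F \<subseteq> I \<longrightarrow> (\<Sum>\<^sub>\<infinity>i\<in>I - F. b i) < e)"
proof -
  have "(b has_sum (\<Sum>\<^sub>\<infinity>i\<in>I. b i)) I"
    using assms(1) by simp
  then have "\<forall>\<^sub>F F in finite_subsets_at_top I. dist (\<Sum>i\<in>F. b i) (\<Sum>\<^sub>\<infinity>i\<in>I. b i) < e"
    unfolding has_sum_def using assms(2) by (rule tendstoD)
  then obtain F0 where F0: "finite F0" "F0 \<subseteq> I"
    and close: "\<And>F. finite F \<and> F0 \<subseteq> F \<and> F \<subseteq> I \<Longrightarrow> dist (\<Sum>i\<in>F. b i) (\<Sum>\<^sub>\<infinity>i\<in>I. b i) < e"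
    unfolding eventually_finite_subsets_at_top by blast
  show ?thesis
  proof (intro exI[of _ F0] conjI F0 allI impI)
    fix F assume F: "finite F \<and> F0 \<subseteq> F \<and> F \<subseteq> I"
    have "(\<Sum>\<^sub>\<infinity>i\<in>I. b i) = (\<Sum>i\<in>F. b i) + (\<Sum>\<^sub>\<infinity>i\<in>I - F. b i)"
      using F by (intro infsum_split_finite[OF assms(1)]) auto
    then show "(\<Sum>\<^sub>\<infinity>i\<in>I - F. b i) < e"
      using close[OF F] by (simp add: dist_real_def)
  qed
qed

lemma fock_norm_tail_le:
  assumes hb: "0 < hb" and b: "b summable_on I" "\<And>i. i \<in> I \<Longrightarrow> 0 \<le> b i"
    and f: "\<And>i. i \<in> I \<Longrightarrow> fock_weighted_le hb (\<lambda>_. 1) (f i) ((b i)\<^sup>2)"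
    and F: "finite F" "F \<subseteq> I"
  shows "fock_norm hb (\<lambda>m. (\<Sum>\<^sub>\<infinity>i\<in>I. f i m) - (\<Sum>i\<in>F. f i m)) \<le> (\<Sum>\<^sub>\<infinity>i\<in>I - F. b i)"
proof -
  have f_summable: "(\<lambda>i. f i m) summable_on I" if "m \<in> fock_idx" for m
    using hb b f that by (rule fock_coeff_summable_on)
  have "fock_weighted_le hb (\<lambda>_. 1) (\<lambda>m. \<Sum>\<^sub>\<infinity>i\<in>I - F. f i m) ((\<Sum>\<^sub>\<infinity>i\<in>I - F. b i)\<^sup>2)"
  proof (rule fock_weighted_le_infsum[OF hb])
    show "b summable_on I - F"
      using b(1) by (rule summable_on_subset) blast
    show "(\<lambda>i. f i m) summable_on I - F" if "m \<in> fock_idx" for m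
      using f_summable[OF that] by (rule summable_on_subset) blast
  qed (use b f in auto)
  then have "fock_weighted_le hb (\<lambda>_. 1) (\<lambda>m. (\<Sum>\<^sub>\<infinity>i\<in>I. f i m) - (\<Sum>i\<in>F. f i m))
      ((\<Sum>\<^sub>\<infinity>i\<in>I - F. b i)\<^sup>2)"
    using f_summable F by (subst fock_weighted_le_cong) (auto simp: infsum_split_finite)
  then have "fock_norm hb (\<lambda>m. (\<Sum>\<^sub>\<infinity>i\<in>I. f i m) - (\<Sum>i\<in>F. f i m)) \<le> sqrt ((\<Sum>\<^sub>\<infinity>i\<in>I - F. b i)\<^sup>2)"
    by (rule fock_norm_le_if_weighted_le[OF hb])
  moreover have "0 \<le> (\<Sum>\<^sub>\<infinity>i\<in>I - F. b i)"
    using b(2) by (intro infsum_nonneg) auto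
  ultimately show ?thesis
    by simp
qed

lemma fock_has_sum_if_norm_summable:
  assumes hb: "0 < hb" and b: "b summable_on I" "\<And>i. i \<in> I \<Longrightarrow> 0 \<le> b i"
    and f: "\<And>i. i \<in> I \<Longrightarrow> fock_weighted_le hb (\<lambda>_. 1) (f i) ((b i)\<^sup>2)"
  shows "fock_has_sum hb f I (\<lambda>m. \<Sum>\<^sub>\<infinity>i\<in>I. f i m)"
proof -
  have "\<exists>F0. finite F0 \<and> F0 \<subseteq> I \<and> (\<forall>F. finite F \<and> F0 \<subseteq> F \<and> F \<subseteq> I \<longrightarrow>
          fock_norm hb (\<lambda>m. (\<Sum>\<^sub>\<infinity>i\<in>I. f i m) - (\<Sum>i\<in>F. f i m)) < e)" if "0 < e" for e
    using infsum_tail_less[OF b(1) that] fock_norm_tail_le[OF hb b f] by (meson le_less_trans)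
  moreover have "in_fock hb (\<lambda>m. \<Sum>\<^sub>\<infinity>i\<in>I. f i m)"
    using fock_weighted_le_infsum[OF hb _ b f fock_coeff_summable_on[OF hb b f]]
    by (rule in_fock_if_weighted_le[OF hb]) simp
  moreover have "in_fock hb (f i)" if "i \<in> I" for i
    using f[OF that] by (rule in_fock_if_weighted_le[OF hb])
  ultimately show ?thesis
    unfolding fock_has_sum_def by blast
qed

section \<open>Monomials, creation and annihilation\<close>

definition grade :: "(nat \<Rightarrow> nat) \<Rightarrow> nat" where
  "grade m = (\<Sum>k\<in>{k. m k \<noteq> 0}. k * m k)"

definition bump :: "nat \<Rightarrow> (nat \<Rightarrow> nat) \<Rightarrow> nat \<Rightarrow> nat" where
  "bump k m = m(k := Suc (m k))"

lemma finite_support_if_fock_idx: "m \<in> fock_idx \<Longrightarrow> finite {k. m k \<noteq> 0}"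
  unfolding fock_idx_def by simp

lemma fock_idx_upd:
  assumes m: "m \<in> fock_idx" and k: "0 < k"
  shows "m(k := v) \<in> fock_idx"
proof -
  have "{j. (m(k := v)) j \<noteq> 0} \<subseteq> insert k {j. m j \<noteq> 0}"
    by auto
  then have "finite {j. (m(k := v)) j \<noteq> 0}"
    by (rule finite_subset) (use finite_support_if_fock_idx[OF m] in simp)
  then show ?thesis
    using m k unfolding fock_idx_def by simp
qed

lemma inj_bump: "inj (bump k)"
proof (rule injI)
  fix m m' assume eq: "bump k m = bump k m'"
  have "bump k m k = bump k m' k"
    using eq by simp
  then have "m k = m' k"
    by (simp add: bump_def)
  then show "m = m'"
    using eq unfolding bump_def by (metis fun_upd_triv fun_upd_upd)
qed

lemma bump_in_fock_idx: "m \<in> fock_idx \<Longrightarrow> 0 < k \<Longrightarrow> bump k m \<in> fock_idx"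
  unfolding bump_def by (rule fock_idx_upd)

lemma in_fock_idx_if_bump: "bump k m \<in> fock_idx \<Longrightarrow> 0 < k \<Longrightarrow> m \<in> fock_idx"
  using fock_idx_upd[of "bump k m" k "m k"] by (simp add: bump_def)

lemma grade_eq_sum:
  "finite S \<Longrightarrow> {k. m k \<noteq> 0} \<subseteq> S \<Longrightarrow> grade m = (\<Sum>k\<in>S. k * m k)"
  unfolding grade_def by (rule sum.mono_neutral_left) auto

lemma fock_wt_eq_prod:
  "finite S \<Longrightarrow> {k. m k \<noteq> 0} \<subseteq> S \<Longrightarrow> fock_wt hb m = (\<Prod>k\<in>S. (hb * real k) ^ m k * fact (m k))"
  unfolding fock_wt_def by (rule prod.mono_neutral_left) auto

lemma grade_bump:
  assumes "m \<in> fock_idx"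
  shows "grade (bump k m) = grade m + k"
proof -
  define S where "S = insert k {j. m j \<noteq> 0}"
  have S: "finite S" "k \<in> S"
    using finite_support_if_fock_idx[OF assms] by (simp_all add: S_def)
  have grade_m: "grade m = (\<Sum>j\<in>S. j * m j)"
    by (rule grade_eq_sum[OF S(1)]) (auto simp: S_def)
  have "grade (bump k m) = (\<Sum>j\<in>S. j * m j + (if j = k then k else 0))"
    by (subst grade_eq_sum[OF S(1)]) (auto simp: S_def bump_def intro!: sum.cong)
  also have "\<dots> = grade m + k"
    using S by (simp add: sum.distrib grade_m)
  finally show ?thesis .
qed

lemma fock_wt_bump:
  assumes "m \<in> fock_idx"
  shows "fock_wt hb (bump k m) = fock_wt hb m * (hb * real k * real (m k + 1))"
proof -
  define S where "S = insert k {j. m j \<noteq> 0}"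
  have S: "finite S" "k \<in> S"
    using finite_support_if_fock_idx[OF assms] by (simp_all add: S_def)
  have wt_m: "fock_wt hb m = (\<Prod>j\<in>S. (hb * real j) ^ m j * fact (m j))"
    by (rule fock_wt_eq_prod[OF S(1)]) (auto simp: S_def)
  have "fock_wt hb (bump k m)
      = (\<Prod>j\<in>S. (hb * real j) ^ m j * fact (m j) * (if j = k then hb * real k * real (m k + 1) else 1))"
    by (subst fock_wt_eq_prod[OF S(1)]) (auto simp: S_def bump_def algebra_simps intro!: prod.cong)
  also have "\<dots> = fock_wt hb m * (hb * real k * real (m k + 1))"
    using S by (simp add: prod.distrib wt_m)
  finally show ?thesis .
qed

lemma mult_le_grade:
  assumes "m \<in> fock_idx"
  shows "k * m k \<le> grade m"
proof (cases "m k = 0")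
  case False
  show ?thesis
    unfolding grade_def using False finite_support_if_fock_idx[OF assms]
    by (intro member_le_sum[of k "{k. m k \<noteq> 0}" "\<lambda>k. k * m k"]) simp_all
qed simp

lemma fock_raise_bump: "fock_raise k c (bump k m) = c m"
  unfolding fock_raise_def bump_def by simp

lemma fock_raise_eq_0_if_not_bump: "m \<notin> range (bump k) \<Longrightarrow> fock_raise k c m = 0"
proof (rule ccontr)
  assume "fock_raise k c m \<noteq> 0"
  then have "m = bump k (m(k := m k - 1))"
    unfolding fock_raise_def bump_def by (auto split: if_splits)
  then show "m \<notin> range (bump k) \<Longrightarrow> False"
    by blast
qed

lemma fock_lower_eq: "fock_lower hb k c m = complex_of_real (hb * real k * real (m k + 1)) * c (bump k m)"
  unfolding fock_lower_def bump_def by simp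


lemma fock_weighted_le_raise:
  assumes hb: "0 < hb" and k: "0 < k" and c: "fock_weighted_le hb w' c B"
    and w: "\<And>m. m \<in> fock_idx \<Longrightarrow> hb * real k * real (m k + 1) * w (bump k m) \<le> w' m"
  shows "fock_weighted_le hb w (fock_raise k c) B"
  unfolding fock_weighted_le_def
proof (intro allI impI)
  fix A assume A: "finite A \<and> A \<subseteq> fock_idx"
  define T where "T = bump k -` A"
  have T: "finite T" "T \<subseteq> fock_idx"
    using A in_fock_idx_if_bump[OF _ k] unfolding T_def by (auto intro: finite_vimageI inj_bump)
  let ?F = "\<lambda>m. (cmod (fock_raise k c m))\<^sup>2 * fock_wt hb m * w m"
  have "(\<Sum>m\<in>A. ?F m) = (\<Sum>m\<in>bump k ` T. ?F m)"
    using A by (intro sum.mono_neutral_right) (auto simp: T_def fock_raise_eq_0_if_not_bump)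
  also have "\<dots> = (\<Sum>m\<in>T. ?F (bump k m))"
    by (rule sum.reindex[OF inj_on_subset[OF inj_bump], simplified])
  also have "\<dots> \<le> (\<Sum>m\<in>T. (cmod (c m))\<^sup>2 * fock_wt hb m * w' m)"
  proof (rule sum_mono)
    fix m assume "m \<in> T"
    then have m: "m \<in> fock_idx"
      using T by blast
    have "?F (bump k m) = (cmod (c m))\<^sup>2 * fock_wt hb m * (hb * real k * real (m k + 1) * w (bump k m))"
      by (simp add: fock_raise_bump fock_wt_bump[OF m])
    also have "\<dots> \<le> (cmod (c m))\<^sup>2 * fock_wt hb m * w' m"
      using w[OF m] fock_wt_nonneg[OF hb] by (intro mult_left_mono) auto
    finally show "?F (bump k m) \<le> (cmod (c m))\<^sup>2 * fock_wt hb m * w' m" .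
  qed
  also have "\<dots> \<le> B"
    using c T unfolding fock_weighted_le_def by blast
  finally show "(\<Sum>m\<in>A. ?F m) \<le> B" .
qed

lemma fock_weighted_le_lower:
  assumes hb: "0 < hb" and k: "0 < k" and c: "fock_weighted_le hb w' c B"
    and w: "\<And>m. m \<in> fock_idx \<Longrightarrow> hb * real k * real (m k + 1) * w m \<le> w' (bump k m)"
  shows "fock_weighted_le hb w (fock_lower hb k c) B"
  unfolding fock_weighted_le_def
proof (intro allI impI)
  fix A assume A: "finite A \<and> A \<subseteq> fock_idx"
  let ?G = "\<lambda>m. (cmod (c m))\<^sup>2 * fock_wt hb m * w' m"
  have "(\<Sum>m\<in>A. (cmod (fock_lower hb k c m))\<^sup>2 * fock_wt hb m * w m) \<le> (\<Sum>m\<in>A. ?G (bump k m))"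
  proof (rule sum_mono)
    fix m assume "m \<in> A"
    then have m: "m \<in> fock_idx"
      using A by blast
    define x where "x = hb * real k * real (m k + 1)"
    have "0 \<le> x"
      using hb by (simp add: x_def)
    then have "cmod (fock_lower hb k c m) = x * cmod (c (bump k m))"
      unfolding fock_lower_eq x_def[symmetric] norm_mult norm_of_real by simp
    then have "(cmod (fock_lower hb k c m))\<^sup>2 * fock_wt hb m * w m
        = (cmod (c (bump k m)))\<^sup>2 * (fock_wt hb m * x) * (x * w m)"
      by (simp add: power2_eq_square algebra_simps)
    also have "\<dots> = (cmod (c (bump k m)))\<^sup>2 * fock_wt hb (bump k m) * (x * w m)"
      by (simp add: fock_wt_bump[OF m] x_def)
    also have "\<dots> \<le> ?G (bump k m)"
      using w[OF m] fock_wt_nonneg[OF hb] unfolding x_def by (intro mult_left_mono) auto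
    finally show "(cmod (fock_lower hb k c m))\<^sup>2 * fock_wt hb m * w m \<le> ?G (bump k m)" .
  qed
  also have "\<dots> = (\<Sum>m\<in>bump k ` A. ?G m)"
    by (rule sum.reindex[OF inj_on_subset[OF inj_bump], simplified, symmetric])
  also have "\<dots> \<le> B"
    using c A bump_in_fock_idx[OF _ k] unfolding fock_weighted_le_def by blast
  finally show "(\<Sum>m\<in>A. (cmod (fock_lower hb k c m))\<^sup>2 * fock_wt hb m * w m) \<le> B" .
qed

lemma fock_weighted_le_scale:
  assumes hb: "0 < hb" and c: "fock_weighted_le hb w' c B"
    and w: "\<And>m. m \<in> fock_idx \<Longrightarrow> (cmod z)\<^sup>2 * w m \<le> w' m"
  shows "fock_weighted_le hb w (\<lambda>m. z * c m) B"
  unfolding fock_weighted_le_def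
proof (intro allI impI)
  fix A assume A: "finite A \<and> A \<subseteq> fock_idx"
  have "(\<Sum>m\<in>A. (cmod (z * c m))\<^sup>2 * fock_wt hb m * w m) \<le> (\<Sum>m\<in>A. (cmod (c m))\<^sup>2 * fock_wt hb m * w' m)"
  proof (rule sum_mono)
    fix m assume "m \<in> A"
    then have "(cmod (c m))\<^sup>2 * fock_wt hb m * ((cmod z)\<^sup>2 * w m) \<le> (cmod (c m))\<^sup>2 * fock_wt hb m * w' m"
      using A w fock_wt_nonneg[OF hb] by (intro mult_left_mono) auto
    then show "(cmod (z * c m))\<^sup>2 * fock_wt hb m * w m \<le> (cmod (c m))\<^sup>2 * fock_wt hb m * w' m"
      by (simp add: norm_mult power_mult_distrib ac_simps)
  qed
  also have "\<dots> \<le> B"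
    using c A unfolding fock_weighted_le_def by blast
  finally show "(\<Sum>m\<in>A. (cmod (z * c m))\<^sup>2 * fock_wt hb m * w m) \<le> B" .
qed

definition vanishes_below :: "nat \<Rightarrow> fock \<Rightarrow> bool" where
  "vanishes_below s c \<longleftrightarrow> (\<forall>m\<in>fock_idx. grade m < s \<longrightarrow> c m = 0)"

lemma vanishes_below_raise:
  assumes "vanishes_below s c" "0 < k"
  shows "vanishes_below (s + k) (fock_raise k c)"
  unfolding vanishes_below_def
proof (intro ballI impI)
  fix m assume m: "m \<in> fock_idx" "grade m < s + k"
  show "fock_raise k c m = 0"
  proof (cases "m \<in> range (bump k)")
    case True
    then obtain m' where m': "m = bump k m'"
      by blast
    then have "m' \<in> fock_idx"
      using m(1) assms(2) by (simp add: in_fock_idx_if_bump)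
    then show ?thesis
      using assms m m' grade_bump unfolding vanishes_below_def by (simp add: fock_raise_bump)
  qed (rule fock_raise_eq_0_if_not_bump)
qed

lemma vanishes_below_lower:
  assumes "vanishes_below s c" "0 < k"
  shows "vanishes_below (s - k) (fock_lower hb k c)"
  using assms bump_in_fock_idx grade_bump unfolding vanishes_below_def by (simp add: fock_lower_eq)

lemma vanishes_below_scale: "vanishes_below s c \<Longrightarrow> vanishes_below s (\<lambda>m. z * c m)"
  unfolding vanishes_below_def by simp

section \<open>The Lax chain\<close>

lemma L_out_eq:
  "L_out e1 e2 a b c =
     (if a = b then (\<lambda>m. complex_of_real ((e1 + e2) * real a) * c m)
      else if a < b then fock_raise (b - a) c
      else fock_lower (- e1 * e2) (a - b) c)"
proof -
  have "nat (int b - int a) = b - a" "nat (- (int b - int a)) = a - b"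
    by simp_all
  then show ?thesis
    unfolding L_out_def Vbar_out_def by (auto simp del: nat_diff_distrib')
qed

lemma vanishes_below_L_out:
  assumes "vanishes_below s c"
  shows "vanishes_below (s + b - a) (L_out e1 e2 a b c)"
proof -
  consider "a = b" | "a < b" | "b < a"
    by linarith
  then show ?thesis
  proof cases
    case 1
    then show ?thesis
      using assms by (simp add: L_out_eq vanishes_below_scale)
  next
    case 2
    then show ?thesis
      using vanishes_below_raise[OF assms, of "b - a"] by (simp add: L_out_eq)
  next
    case 3
    then have "s + b - a = s - (a - b)"
      by simp
    then show ?thesis
      using 3 vanishes_below_lower[OF assms, of "a - b"] by (simp add: L_out_eq)
  qed
qed

lemma vanishes_below_lax_chain:
  "xs \<noteq> [] \<Longrightarrow> vanishes_below (Max (set xs) - hd xs) (lax_chain e1 e2 xs c)"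
proof (induction e1 e2 xs c rule: lax_chain.induct)
  case (1 e1 e2 a b rest c)
  let ?M = "Max (set (b # rest))"
  have "vanishes_below (?M - b + b - a) (L_out e1 e2 a b (lax_chain e1 e2 (b # rest) c))"
    using 1 by (intro vanishes_below_L_out) simp
  moreover have "Max (set (a # b # rest)) = max a ?M"
    using Max_insert[of "set (b # rest)" a] by simp
  moreover have "?M - b + b - a = max a ?M - a"
    using Max_ge[of "set (b # rest)" b] by (cases "a \<le> ?M") auto
  ultimately show ?case
    by simp
qed (simp_all add: vanishes_below_def)

(* Every L_{a,b} preserves grade m + (current index), and at that level N it multiplies
   coefficients by at most K (N + 1)^2; the denominator pays for j such steps. *)
definition lax_weight :: "real \<Rightarrow> real \<Rightarrow> nat \<Rightarrow> nat \<Rightarrow> real" where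
  "lax_weight q K j N = q ^ N / (K * (real N + 1)\<^sup>2) ^ j"

lemma lax_weight_step:
  assumes "0 < K" "0 \<le> q" "0 \<le> x" "x \<le> K * (real N + 1)\<^sup>2"
  shows "x * lax_weight q K (Suc j) N \<le> lax_weight q K j N"
proof -
  have "x * lax_weight q K (Suc j) N = x / (K * (real N + 1)\<^sup>2) * lax_weight q K j N"
    unfolding lax_weight_def by (simp add: field_simps)
  also have "\<dots> \<le> 1 * lax_weight q K j N"
    using assms by (intro mult_right_mono) (auto simp: lax_weight_def divide_le_eq)
  finally show ?thesis
    by simp
qed

lemma bump_factor_le:
  assumes "m \<in> fock_idx" "k \<le> n" "0 \<le> hb" "hb \<le> K"
  shows "hb * real k * real (m k + 1) \<le> K * (real (grade m + n) + 1)\<^sup>2"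
proof -
  have "k * (m k + 1) \<le> grade m + n"
    using mult_le_grade[OF assms(1), of k] assms(2) by simp
  then have "real k * real (m k + 1) \<le> real (grade m + n)"
    by (metis of_nat_le_iff of_nat_mult)
  also have "\<dots> \<le> (real (grade m + n) + 1)\<^sup>2"
    by (simp add: power2_eq_square algebra_simps)
  finally show ?thesis
    using assms(3,4) by (simp add: mult.assoc mult_mono)
qed

lemma bump_factor_lax_weight_le:
  assumes "m \<in> fock_idx" "k \<le> n" "0 < hb" "hb \<le> K" "0 \<le> q"
  shows "hb * real k * real (m k + 1) * lax_weight q K (Suc j) (grade m + n) \<le> lax_weight q K j (grade m + n)"
  using assms by (intro lax_weight_step bump_factor_le) auto

lemma diagonal_lax_weight_le:
  assumes "0 < K" "(e1 + e2)\<^sup>2 \<le> K" "0 \<le> q"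
  shows "(cmod (complex_of_real ((e1 + e2) * real a)))\<^sup>2 * lax_weight q K (Suc j) (n + a)
           \<le> lax_weight q K j (n + a)"
proof (rule lax_weight_step)
  have "(cmod (complex_of_real ((e1 + e2) * real a)))\<^sup>2 = (e1 + e2)\<^sup>2 * (real a)\<^sup>2"
    by (simp only: norm_of_real power2_abs) (simp add: power_mult_distrib)
  also have "\<dots> \<le> K * (real (n + a) + 1)\<^sup>2"
    using assms by (intro mult_mono power_mono) auto
  finally show "(cmod (complex_of_real ((e1 + e2) * real a)))\<^sup>2 \<le> K * (real (n + a) + 1)\<^sup>2" .
qed (use assms in simp_all)

lemma fock_weighted_le_L_out:
  fixes e1 e2 :: real
  assumes hb: "0 < - e1 * e2" and K: "- e1 * e2 \<le> K" "(e1 + e2)\<^sup>2 \<le> K" and q: "0 \<le> q"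
    and c: "fock_weighted_le (- e1 * e2) (\<lambda>m. lax_weight q K j (grade m + b)) c B"
  shows "fock_weighted_le (- e1 * e2) (\<lambda>m. lax_weight q K (Suc j) (grade m + a)) (L_out e1 e2 a b c) B"
proof -
  consider "a = b" | "a < b" | "b < a"
    by linarith
  then show ?thesis
  proof cases
    case 1
    have "0 < K"
      using hb K(1) by linarith
    then have "fock_weighted_le (- e1 * e2) (\<lambda>m. lax_weight q K (Suc j) (grade m + b))
        (\<lambda>m. complex_of_real ((e1 + e2) * real b) * c m) B"
      by (intro fock_weighted_le_scale[OF hb c] diagonal_lax_weight_le[OF _ K(2) q])
    then show ?thesis
      using 1 by (simp add: L_out_eq)
  next
    case 2
    have "fock_weighted_le (- e1 * e2) (\<lambda>m. lax_weight q K (Suc j) (grade m + a)) (fock_raise (b - a) c) B"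
    proof (rule fock_weighted_le_raise[OF hb _ c])
      fix m assume m: "m \<in> fock_idx"
      have "grade (bump (b - a) m) + a = grade m + b"
        using grade_bump[OF m] 2 by simp
      then show "- e1 * e2 * real (b - a) * real (m (b - a) + 1)
          * lax_weight q K (Suc j) (grade (bump (b - a) m) + a) \<le> lax_weight q K j (grade m + b)"
        using bump_factor_lax_weight_le[OF m _ hb K(1) q, of "b - a" b] by simp
    qed (use 2 in simp)
    then show ?thesis
      using 2 by (simp add: L_out_eq)
  next
    case 3
    have "fock_weighted_le (- e1 * e2) (\<lambda>m. lax_weight q K (Suc j) (grade m + a))
        (fock_lower (- e1 * e2) (a - b) c) B"
    proof (rule fock_weighted_le_lower[OF hb _ c])
      fix m assume m: "m \<in> fock_idx"
      have "grade (bump (a - b) m) + b = grade m + a"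
        using grade_bump[OF m] 3 by simp
      then show "- e1 * e2 * real (a - b) * real (m (a - b) + 1)
          * lax_weight q K (Suc j) (grade m + a) \<le> lax_weight q K j (grade (bump (a - b) m) + b)"
        using bump_factor_lax_weight_le[OF m _ hb K(1) q, of "a - b" a] by simp
    qed (use 3 in simp)
    then show ?thesis
      using 3 by (simp add: L_out_eq)
  qed
qed

lemma fock_weighted_le_lax_chain:
  fixes e1 e2 :: real
  shows "0 < - e1 * e2 \<Longrightarrow> - e1 * e2 \<le> K \<Longrightarrow> (e1 + e2)\<^sup>2 \<le> K \<Longrightarrow> 0 \<le> q \<Longrightarrow> xs \<noteq> [] \<Longrightarrow>
    fock_weighted_le (- e1 * e2) (\<lambda>m. lax_weight q K 0 (grade m + last xs)) c B \<Longrightarrow>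
    fock_weighted_le (- e1 * e2) (\<lambda>m. lax_weight q K (length xs - 1) (grade m + hd xs))
      (lax_chain e1 e2 xs c) B"
proof (induction e1 e2 xs c rule: lax_chain.induct)
  case (1 e1 e2 a b rest c)
  then show ?case
    using fock_weighted_le_L_out[of e1 e2 K q "length rest" b "lax_chain e1 e2 (b # rest) c" B a]
    by simp
qed simp_all

section \<open>The Stanley--Cauchy kernel\<close>

lemma poly_times_power_bounded:
  fixes x :: real
  assumes x: "0 \<le> x" "x < 1"
  shows "\<exists>D. \<forall>n. real (n + 1) ^ p * x ^ n \<le> D"
proof (cases "p = 0")
  case True
  then show ?thesis
    using x by (intro exI[of _ 1] allI) (simp add: power_le_one)
next
  case False
  define c where "c = root p x"
  have c: "0 \<le> c" "c < 1" "c ^ p = x"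
    using x False unfolding c_def by auto
  have "(\<lambda>n. of_nat n * c ^ n) \<longlonglongrightarrow> (0::real)"
    using c by (intro powser_times_n_limit_0) simp
  then have "Bseq (\<lambda>n. real n * c ^ n)"
    by (rule convergent_imp_Bseq[OF convergentI])
  then obtain D where D: "\<And>n. real n * c ^ n \<le> D"
    by (metis BseqE abs_le_D1 real_norm_def)
  have "real (n + 1) ^ p * x ^ n \<le> (D + 1) ^ p" for n
  proof -
    have "real (n + 1) * c ^ n \<le> D + 1"
      using D[of n] power_le_one[OF c(1) less_imp_le[OF c(2)], of n] by (simp add: algebra_simps)
    then have "(real (n + 1) * c ^ n) ^ p \<le> (D + 1) ^ p"
      using c by (intro power_mono) simp_all
    moreover have "(c ^ n) ^ p = x ^ n"
      using c(3) by (metis power_mult mult.commute)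
    ultimately show ?thesis
      by (simp add: power_mult_distrib)
  qed
  then show ?thesis
    by blast
qed

lemma summable_real_times_power:
  fixes x :: real
  assumes x: "0 \<le> x" "x < 1"
  shows "summable (\<lambda>n. real n * x ^ n)"
proof -
  have s: "0 \<le> sqrt x" "sqrt x < 1"
    using x by simp_all
  obtain D where D: "\<And>n. real (n + 1) ^ 1 * sqrt x ^ n \<le> D"
    using poly_times_power_bounded[OF s] by blast
  show ?thesis
  proof (rule summable_comparison_test')
    show "summable (\<lambda>n. D * sqrt x ^ n)"
      using s by (intro summable_mult summable_geometric) simp
    fix n
    have "sqrt x ^ n * sqrt x ^ n = x ^ n"
      using x by (simp flip: power_mult_distrib)
    then have "real n * x ^ n \<le> (real (n + 1) * sqrt x ^ n) * sqrt x ^ n"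
      using x by (simp add: mult.assoc mult_right_mono)
    also have "\<dots> \<le> D * sqrt x ^ n"
      using D[of n] s by (intro mult_right_mono) simp_all
    finally show "norm (real n * x ^ n) \<le> D * sqrt x ^ n"
      using x by simp
  qed
qed

lemma summable_sq_coeffs_if_summable:
  fixes a :: "nat \<Rightarrow> complex"
  assumes R: "1 < R" and summable: "summable (\<lambda>k. a (Suc k) * complex_of_real R ^ Suc k / of_nat (Suc k))"
  shows "summable (\<lambda>k. (cmod (a k))\<^sup>2 * R ^ k / real k)"
proof -
  have "Bseq (\<lambda>k. a (Suc k) * complex_of_real R ^ Suc k / of_nat (Suc k))"
    using summable_LIMSEQ_zero[OF summable] by (rule convergent_imp_Bseq[OF convergentI])
  then obtain C where C: "\<And>k. norm (a (Suc k) * complex_of_real R ^ Suc k / of_nat (Suc k)) \<le> C"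
    by (meson BseqE)
  have bound: "cmod (a k) * R ^ k / real k \<le> C" if "0 < k" for k
  proof -
    obtain j where j: "k = Suc j"
      using \<open>0 < k\<close> gr0_implies_Suc by blast
    show ?thesis
      using C[of j] R unfolding j norm_mult norm_divide norm_power norm_of_real norm_of_nat by simp
  qed
  show ?thesis
  proof (rule summable_comparison_test')
    show "summable (\<lambda>k. C\<^sup>2 * (real k * (1 / R) ^ k))"
      using R by (intro summable_mult summable_real_times_power) simp_all
    fix k :: nat
    show "norm ((cmod (a k))\<^sup>2 * R ^ k / real k) \<le> C\<^sup>2 * (real k * (1 / R) ^ k)"
    proof (cases "k = 0")
      case False
      have "0 \<le> cmod (a k) * R ^ k / real k"
        using R by simp
      then have "(cmod (a k) * R ^ k / real k)\<^sup>2 \<le> C\<^sup>2"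
        using bound False by (intro power_mono) simp_all
      then have "(cmod (a k) * R ^ k / real k)\<^sup>2 * (real k / R ^ k) \<le> C\<^sup>2 * (real k / R ^ k)"
        using R by (intro mult_right_mono) simp_all
      then show ?thesis
        using R False by (simp add: power2_eq_square power_one_over field_simps)
    qed simp
  qed
qed

lemma sum_power_div_fact_le_exp:
  fixes a :: real
  assumes "0 \<le> a" "finite J"
  shows "(\<Sum>j\<in>J. a ^ j / fact j) \<le> exp a"
proof -
  have exp_sums: "(\<lambda>n. a ^ n / fact n) sums exp a"
    using exp_converges[of a] by (simp add: field_simps)
  have "(\<Sum>j\<in>J. a ^ j / fact j) \<le> (\<Sum>n. a ^ n / fact n)"
    using assms by (intro sum_le_suminf sums_summable[OF exp_sums]) auto
  then show ?thesis
    using exp_sums by (simp add: sums_iff)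
qed

lemma sum_prod_le_prod_of_bounds:
  fixes g :: "'k \<Rightarrow> nat \<Rightarrow> real" and A :: "('k \<Rightarrow> nat) set"
  assumes K: "finite K" and A: "finite A" "\<And>m. m \<in> A \<Longrightarrow> {k. m k \<noteq> 0} \<subseteq> K"
    and g: "\<And>k j. 0 \<le> g k j" and E: "\<And>k J. finite J \<Longrightarrow> sum (g k) J \<le> E k"
  shows "(\<Sum>m\<in>A. \<Prod>k\<in>K. g k (m k)) \<le> (\<Prod>k\<in>K. E k)"
proof -
  define J where "J = (\<Union>m\<in>A. m ` K)"
  have J: "finite J"
    using A K by (simp add: J_def)
  have "inj_on (\<lambda>m. restrict m K) A"
  proof (rule inj_onI, rule ext)
    fix m m' k assume m: "m \<in> A" "m' \<in> A" "restrict m K = restrict m' K"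
    show "m k = m' k"
    proof (cases "k \<in> K")
      case False
      then have "m k = 0" "m' k = 0"
        using A(2)[OF m(1)] A(2)[OF m(2)] by auto
      then show ?thesis
        by simp
    qed (use fun_cong[OF m(3), of k] in simp)
  qed
  then have "(\<Sum>m\<in>A. \<Prod>k\<in>K. g k (m k)) = (\<Sum>f\<in>(\<lambda>m. restrict m K) ` A. \<Prod>k\<in>K. g k (f k))"
    by (simp add: sum.reindex)
  also have "\<dots> \<le> (\<Sum>f\<in>PiE K (\<lambda>_. J). \<Prod>k\<in>K. g k (f k))"
    using K J by (intro sum_mono2 prod_nonneg g finite_PiE) (auto simp: J_def)
  also have "\<dots> = (\<Prod>k\<in>K. \<Sum>j\<in>J. g k j)"
    using K J by (intro prod_sum_PiE[symmetric])
  also have "\<dots> \<le> (\<Prod>k\<in>K. E k)"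
    using J by (intro prod_mono) (auto intro: sum_nonneg g E)
  finally show ?thesis .
qed

lemma stanley_cauchy_factor:
  fixes v :: complex and u q :: real
  assumes "0 < u"
  shows "(cmod (v / complex_of_real u) ^ j / fact j)\<^sup>2 * (u ^ j * fact j) * q ^ (k * j)
       = ((cmod v)\<^sup>2 * q ^ k / u) ^ j / fact j"
proof -
  have norm_eq: "cmod (v / complex_of_real u) ^ j = cmod v ^ j / u ^ j"
    using assms by (simp add: norm_divide power_divide)
  have power_eq: "((cmod v)\<^sup>2 * q ^ k / u) ^ j = (cmod v ^ j)\<^sup>2 * q ^ (k * j) / u ^ j"
    by (simp add: power_divide power_mult_distrib mult.commute flip: power_mult)
  show ?thesis
    unfolding norm_eq power_eq using assms by (simp add: power2_eq_square field_simps)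
qed


lemma stanley_cauchy_weighted_term:
  assumes hb: "0 < hb" and m: "m \<in> fock_idx"
  shows "(cmod (stanley_cauchy hb vin m))\<^sup>2 * fock_wt hb m * q ^ grade m
       = (\<Prod>k\<in>{k. m k \<noteq> 0}. ((cmod (vin k))\<^sup>2 * q ^ k / (hb * real k)) ^ m k / fact (m k))"
proof -
  let ?S = "{k. m k \<noteq> 0}"
  let ?x = "\<lambda>k. cmod (vin k / complex_of_real (hb * real k))"
  have pos: "0 < hb * real k" if "k \<in> ?S" for k
    using that m hb by (cases k) (auto simp: fock_idx_def)
  have norm_eq: "cmod (stanley_cauchy hb vin m) = (\<Prod>k\<in>?S. ?x k ^ m k / fact (m k))"
    unfolding stanley_cauchy_def prod_norm[symmetric]
    by (rule prod.cong) (simp_all add: norm_divide norm_power)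
  have "q ^ grade m = (\<Prod>k\<in>?S. q ^ (k * m k))"
    unfolding grade_def by (rule power_sum)
  then have "(cmod (stanley_cauchy hb vin m))\<^sup>2 * fock_wt hb m * q ^ grade m
      = (\<Prod>k\<in>?S. (?x k ^ m k / fact (m k))\<^sup>2 * ((hb * real k) ^ m k * fact (m k)) * q ^ (k * m k))"
    unfolding norm_eq fock_wt_def prod_power_distrib by (simp add: prod.distrib)
  also have "\<dots> = (\<Prod>k\<in>?S. ((cmod (vin k))\<^sup>2 * q ^ k / (hb * real k)) ^ m k / fact (m k))"
    using pos by (intro prod.cong refl stanley_cauchy_factor) auto
  finally show ?thesis .
qed

lemma fock_weighted_le_stanley_cauchy:
  assumes hb: "0 < hb" and q: "0 \<le> q" and summable: "summable (\<lambda>k. (cmod (vin k))\<^sup>2 * q ^ k / real k)"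
  shows "fock_weighted_le hb (\<lambda>m. q ^ grade m) (stanley_cauchy hb vin)
           (exp ((\<Sum>k. (cmod (vin k))\<^sup>2 * q ^ k / real k) / hb))"
  unfolding fock_weighted_le_def
proof (intro allI impI)
  fix A assume A: "finite A \<and> A \<subseteq> fock_idx"
  define a where "a k = (cmod (vin k))\<^sup>2 * q ^ k / (hb * real k)" for k
  have a: "0 \<le> a k" for k
    using hb q by (simp add: a_def)
  define K where "K = (\<Union>m\<in>A. {k. m k \<noteq> 0})"
  have K: "finite K"
    using A finite_support_if_fock_idx by (auto simp: K_def)
  have "(\<Sum>m\<in>A. (cmod (stanley_cauchy hb vin m))\<^sup>2 * fock_wt hb m * q ^ grade m)
      = (\<Sum>m\<in>A. \<Prod>k\<in>K. a k ^ m k / fact (m k))"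
  proof (rule sum.cong[OF refl])
    fix m assume m: "m \<in> A"
    then have "(cmod (stanley_cauchy hb vin m))\<^sup>2 * fock_wt hb m * q ^ grade m
        = (\<Prod>k\<in>{k. m k \<noteq> 0}. a k ^ m k / fact (m k))"
      using A stanley_cauchy_weighted_term[OF hb] unfolding a_def by blast
    also have "\<dots> = (\<Prod>k\<in>K. a k ^ m k / fact (m k))"
      using K m by (intro prod.mono_neutral_left) (auto simp: K_def)
    finally show "(cmod (stanley_cauchy hb vin m))\<^sup>2 * fock_wt hb m * q ^ grade m
        = (\<Prod>k\<in>K. a k ^ m k / fact (m k))" .
  qed
  also have "\<dots> \<le> (\<Prod>k\<in>K. exp (a k))"
    using K A by (intro sum_prod_le_prod_of_bounds sum_power_div_fact_le_exp a) (auto simp: K_def a)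
  also have "\<dots> = exp (\<Sum>k\<in>K. a k)"
    by (simp add: exp_sum K)
  also have "(\<Sum>k\<in>K. a k) = (\<Sum>k\<in>K. (cmod (vin k))\<^sup>2 * q ^ k / real k) / hb"
    by (simp add: a_def sum_divide_distrib mult.commute)
  also have "\<dots> \<le> (\<Sum>k. (cmod (vin k))\<^sup>2 * q ^ k / real k) / hb"
    using hb q K by (intro divide_right_mono sum_le_suminf summable) auto
  finally show "(\<Sum>m\<in>A. (cmod (stanley_cauchy hb vin m))\<^sup>2 * fock_wt hb m * q ^ grade m)
      \<le> exp ((\<Sum>k. (cmod (vin k))\<^sup>2 * q ^ k / real k) / hb)"
    by simp
qed

section \<open>Summation over paths\<close>

lemma exists_real_gt_one_in_open:
  assumes "open U" "sphere (0::complex) 1 \<subseteq> U"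
  shows "\<exists>R>1. complex_of_real R \<in> U"
proof -
  have "1 \<in> U"
    using assms(2) by auto
  then obtain \<delta> where \<delta>: "0 < \<delta>" "ball 1 \<delta> \<subseteq> U"
    using assms(1) open_contains_ball by blast
  have "1 - complex_of_real (1 + \<delta> / 2) = complex_of_real (- (\<delta> / 2))"
    by simp
  then have "dist 1 (complex_of_real (1 + \<delta> / 2)) = \<delta> / 2"
    using \<delta>(1) unfolding dist_norm norm_of_real by simp
  then have "complex_of_real (1 + \<delta> / 2) \<in> U"
    using \<delta> by auto
  then show ?thesis
    using \<delta>(1) by (intro exI[of _ "1 + \<delta> / 2"]) simp
qed

lemma sum_power_sum_list_le:
  fixes \<gamma> :: real
  assumes \<gamma>: "0 \<le> \<gamma>" "\<gamma> < 1"
  shows "finite F \<Longrightarrow> F \<subseteq> {hs. length hs = n} \<Longrightarrow> (\<Sum>hs\<in>F. \<gamma> ^ sum_list hs) \<le> (1 / (1 - \<gamma>)) ^ n"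
proof (induction n arbitrary: F)
  case 0
  then have "F \<subseteq> {[]}"
    by auto
  then have "(\<Sum>hs\<in>F. \<gamma> ^ sum_list hs) \<le> (\<Sum>hs\<in>{[]}. \<gamma> ^ sum_list hs)"
    using \<gamma> by (intro sum_mono2) auto
  then show ?case
    by simp
next
  case (Suc n)
  define H where "H = hd ` F"
  define T where "T = tl ` F"
  have HT: "finite H" "finite T" "T \<subseteq> {hs. length hs = n}"
    using Suc.prems unfolding H_def T_def by auto
  have "F \<subseteq> (\<lambda>(h, t). h # t) ` (H \<times> T)"
  proof
    fix hs assume "hs \<in> F"
    moreover have "hs = hd hs # tl hs"
      using \<open>hs \<in> F\<close> Suc.prems(2) by (cases hs) auto
    ultimately show "hs \<in> (\<lambda>(h, t). h # t) ` (H \<times> T)"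
      unfolding H_def T_def by (intro image_eqI[of _ _ "(hd hs, tl hs)"]) auto
  qed
  then have "(\<Sum>hs\<in>F. \<gamma> ^ sum_list hs) \<le> (\<Sum>hs\<in>(\<lambda>(h, t). h # t) ` (H \<times> T). \<gamma> ^ sum_list hs)"
    using HT \<gamma> by (intro sum_mono2) auto
  also have "\<dots> = (\<Sum>(h, t)\<in>H \<times> T. \<gamma> ^ h * \<gamma> ^ sum_list t)"
    by (subst sum.reindex) (auto intro: inj_onI simp: power_add case_prod_beta)
  also have "\<dots> = (\<Sum>h\<in>H. \<gamma> ^ h) * (\<Sum>t\<in>T. \<gamma> ^ sum_list t)"
    by (simp add: sum.cartesian_product[symmetric] sum_product)
  also have "\<dots> \<le> (\<Sum>h. \<gamma> ^ h) * (1 / (1 - \<gamma>)) ^ n"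
    using HT \<gamma> Suc.IH
    by (intro mult_mono sum_le_suminf summable_geometric suminf_nonneg sum_nonneg) auto
  also have "\<dots> = (1 / (1 - \<gamma>)) ^ Suc n"
    using \<gamma> by (simp add: suminf_geometric)
  finally show ?case .
qed

lemma summable_on_power_sum_list:
  fixes \<gamma> :: real
  assumes "0 \<le> \<gamma>" "\<gamma> < 1"
  shows "(\<lambda>hs. \<gamma> ^ sum_list hs) summable_on {hs. length hs = n}"
proof (rule nonneg_bdd_above_summable_on)
  show "bdd_above (sum (\<lambda>hs. \<gamma> ^ sum_list hs) ` {F. F \<subseteq> {hs. length hs = n} \<and> finite F})"
    using sum_power_sum_list_le[OF assms] by (intro bdd_aboveI[of _ "(1 / (1 - \<gamma>)) ^ n"]) blast
qed (use assms in simp)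

lemma power_le_power_sum_list:
  fixes \<gamma> :: real
  assumes "0 \<le> \<gamma>" "\<gamma> \<le> 1" "length hs \<le> n" "\<forall>h\<in>set hs. h \<le> H"
  shows "(\<gamma> ^ (2 * n)) ^ H \<le> (\<gamma> ^ sum_list hs)\<^sup>2"
proof -
  have "sum_list hs \<le> length hs * H"
    using assms(4) by (induction hs) auto
  also have "\<dots> \<le> n * H"
    using assms(3) by simp
  finally have "\<gamma> ^ (2 * (n * H)) \<le> \<gamma> ^ (sum_list hs * 2)"
    using assms(1,2) by (intro power_decreasing) simp_all
  then show ?thesis
    by (simp add: power_mult mult.assoc flip: power_mult)
qed

lemma lax_weight_ge:
  fixes K q D :: real
  assumes K: "0 < K" and q: "1 < q" and D: "\<And>N. real (N + 1) ^ (2 * l) * (1 / sqrt q) ^ N \<le> D"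
    and "H \<le> N"
  shows "1 \<le> K ^ l * D * (1 / sqrt q) ^ H * lax_weight q K l N"
proof -
  define \<tau> where "\<tau> = 1 / sqrt q"
  define X where "X = K ^ l * real (N + 1) ^ (2 * l) * (\<tau> ^ N * \<tau> ^ N)"
  have \<tau>: "0 < \<tau>" "\<tau> \<le> 1" "q ^ N = 1 / (\<tau> ^ N * \<tau> ^ N)"
    using q by (simp_all add: \<tau>_def power_divide flip: power_mult_distrib)
  have "0 \<le> D"
    using D[of 0] by simp
  have "real (N + 1) ^ (2 * l) * \<tau> ^ N * \<tau> ^ N \<le> D * \<tau> ^ H"
    using D[of N] \<tau> \<open>H \<le> N\<close> \<open>0 \<le> D\<close> by (intro mult_mono power_decreasing) (auto simp: \<tau>_def)
  then have "X \<le> K ^ l * D * \<tau> ^ H"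
    using K by (simp add: X_def mult.assoc mult_left_mono)
  moreover have "0 < X"
    using K \<tau> by (simp add: X_def)
  ultimately have "1 \<le> K ^ l * D * \<tau> ^ H / X"
    by simp
  moreover have "lax_weight q K l N = 1 / X"
    unfolding lax_weight_def \<tau>(3) X_def by (simp add: power_mult_distrib power_mult add.commute)
  ultimately show ?thesis
    by (simp add: \<tau>_def)
qed


lemma fock_weighted_le_vacuum_chain:
  fixes e1 e2 :: real
  assumes hb: "0 < - e1 * e2" and q: "1 < q"
    and c: "fock_weighted_le (- e1 * e2) (\<lambda>m. q ^ grade m) c B"
    and D: "\<And>N. real (N + 1) ^ (2 * (length xs - 1)) * (1 / sqrt q) ^ N \<le> D"
    and xs: "xs \<noteq> []" "hd xs = 0" "last xs = 0"
  shows "fock_weighted_le (- e1 * e2) (\<lambda>_. 1) (lax_chain e1 e2 xs c)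
           ((- e1 * e2 + (e1 + e2)\<^sup>2) ^ (length xs - 1) * D * (1 / sqrt q) ^ Max (set xs) * B)"
proof -
  define K where "K = - e1 * e2 + (e1 + e2)\<^sup>2"
  have K: "0 < K" "- e1 * e2 \<le> K" "(e1 + e2)\<^sup>2 \<le> K"
    using hb zero_le_power2[of "e1 + e2"] unfolding K_def by linarith+
  have chain: "fock_weighted_le (- e1 * e2) (\<lambda>m. lax_weight q K (length xs - 1) (grade m)) (lax_chain e1 e2 xs c) B"
    using fock_weighted_le_lax_chain[OF hb K(2,3) _ xs(1), of q c B] q c xs(2,3)
    by (simp add: lax_weight_def)
  have vanishes: "vanishes_below (Max (set xs)) (lax_chain e1 e2 xs c)"
    using vanishes_below_lax_chain[OF xs(1)] xs(2) by simp
  show ?thesis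
    unfolding K_def[symmetric]
  proof (rule fock_weighted_le_reweight[OF hb chain])
    show "0 \<le> K ^ (length xs - 1) * D * (1 / sqrt q) ^ Max (set xs)"
      using K(1) D[of 0] q by simp
    fix m assume "m \<in> fock_idx" "lax_chain e1 e2 xs c m \<noteq> 0"
    then have "Max (set xs) \<le> grade m"
      using vanishes unfolding vanishes_below_def by (meson not_le)
    then show "1 \<le> K ^ (length xs - 1) * D * (1 / sqrt q) ^ Max (set xs)
        * lax_weight q K (length xs - 1) (grade m)"
      by (rule lax_weight_ge[OF K(1) q D])
  qed
qed

lemma fock_weighted_le_vac_term:
  fixes e1 e2 :: real
  assumes hb: "0 < - e1 * e2" and q: "1 < q"
    and c: "fock_weighted_le (- e1 * e2) (\<lambda>m. q ^ grade m) c B"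
    and l: "0 < l" and D: "\<And>N. real (N + 1) ^ (2 * l) * (1 / sqrt q) ^ N \<le> D"
    and \<gamma>: "0 \<le> \<gamma>" "\<gamma> ^ (2 * l) = 1 / sqrt q" and hs: "length hs = l - 1"
  shows "fock_weighted_le (- e1 * e2) (\<lambda>_. 1) (vac_term e1 e2 l hs c)
           ((- e1 * e2 + (e1 + e2)\<^sup>2) ^ l * D * B * (\<gamma> ^ sum_list hs)\<^sup>2)"
proof -
  define K where "K = - e1 * e2 + (e1 + e2)\<^sup>2"
  define xs where "xs = 0 # hs @ [0]"
  have xs: "xs \<noteq> []" "hd xs = 0" "last xs = 0" "length xs - 1 = l"
    using hs l by (simp_all add: xs_def)
  have "vac_term e1 e2 l hs c = lax_chain e1 e2 xs c"
    using l by (simp add: vac_term_def xs_def)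
  then have chain: "fock_weighted_le (- e1 * e2) (\<lambda>_. 1) (vac_term e1 e2 l hs c)
      (K ^ l * D * (1 / sqrt q) ^ Max (set xs) * B)"
    using fock_weighted_le_vacuum_chain[OF hb q c _ xs(1-3), of D, unfolded xs(4)] D
    unfolding K_def by simp
  have "\<gamma> \<le> 1"
    using \<gamma> q l power_le_one_iff[OF \<gamma>(1), of "2 * l"] by simp
  then have "(1 / sqrt q) ^ Max (set xs) \<le> (\<gamma> ^ sum_list hs)\<^sup>2"
    unfolding \<gamma>(2)[symmetric] using \<gamma>(1) hs by (intro power_le_power_sum_list) (auto simp: xs_def)
  moreover have "0 \<le> K"
    using hb zero_le_power2[of "e1 + e2"] unfolding K_def by linarith
  then have "0 \<le> K ^ l * D * B"
    using D[of 0] fock_weighted_le_nonneg[OF c] by simp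
  ultimately have "(K ^ l * D * B) * (1 / sqrt q) ^ Max (set xs) \<le> (K ^ l * D * B) * (\<gamma> ^ sum_list hs)\<^sup>2"
    by (rule mult_left_mono)
  then show ?thesis
    unfolding K_def[symmetric] by (intro fock_weighted_le_mono[OF chain]) (simp add: ac_simps)
qed

lemma vac_term_weighted_le:
  fixes e1 e2 :: real
  assumes hb: "0 < - e1 * e2" and q: "1 < q"
    and c: "fock_weighted_le (- e1 * e2) (\<lambda>m. q ^ grade m) c B"
  shows "\<exists>C \<gamma>. 0 \<le> C \<and> 0 \<le> \<gamma> \<and> \<gamma> < 1 \<and> (\<forall>hs. length hs = l - 1 \<longrightarrow>
           fock_weighted_le (- e1 * e2) (\<lambda>_. 1) (vac_term e1 e2 l hs c) ((C * \<gamma> ^ sum_list hs)\<^sup>2))"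
proof (cases "l = 0")
  case True
  have "fock_weighted_le (- e1 * e2) (\<lambda>_. 1) c (1 * B)"
    using q by (intro fock_weighted_le_reweight[OF hb c]) simp_all
  then show ?thesis
    using True fock_weighted_le_nonneg[OF c]
    by (intro exI[of _ "sqrt B"] exI[of _ 0]) (simp add: vac_term_def)
next
  case False
  have \<tau>: "0 \<le> 1 / sqrt q" "1 / sqrt q < 1"
    using q by simp_all
  obtain D where D: "\<And>N. real (N + 1) ^ (2 * l) * (1 / sqrt q) ^ N \<le> D"
    using poly_times_power_bounded[OF \<tau>] by blast
  define X where "X = (- e1 * e2 + (e1 + e2)\<^sup>2) ^ l * D * B"
  have "0 \<le> - e1 * e2 + (e1 + e2)\<^sup>2"
    using hb zero_le_power2[of "e1 + e2"] by linarith
  then have "0 \<le> X"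
    using D[of 0] fock_weighted_le_nonneg[OF c] by (simp add: X_def)
  \<comment> \<open>The squared norm of the path term is O(sqrt q ^ - max h); as sum h <= l * max h,
    this is O(gamma ^ (2 * sum h)).\<close>
  define \<gamma> where "\<gamma> = root (2 * l) (1 / sqrt q)"
  have \<gamma>: "0 \<le> \<gamma>" "\<gamma> < 1" "\<gamma> ^ (2 * l) = 1 / sqrt q"
    using \<tau> False by (simp_all add: \<gamma>_def)
  have "fock_weighted_le (- e1 * e2) (\<lambda>_. 1) (vac_term e1 e2 l hs c) ((sqrt X * \<gamma> ^ sum_list hs)\<^sup>2)"
    if "length hs = l - 1" for hs
    using fock_weighted_le_vac_term[OF hb q c _ D \<gamma>(1,3) that] False \<open>0 \<le> X\<close>
    by (simp add: X_def power_mult_distrib)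
  then show ?thesis
    using \<open>0 \<le> X\<close> \<gamma> by (intro exI[of _ "sqrt X"] exI[of _ \<gamma>]) simp
qed

lemma in_vac_domain_if_weighted_le:
  fixes e1 e2 :: real
  assumes hb: "0 < - e1 * e2" and q: "1 < q"
    and c: "fock_weighted_le (- e1 * e2) (\<lambda>m. q ^ grade m) c B"
  shows "in_vac_domain e1 e2 l c"
proof -
  obtain C \<gamma> where C: "0 \<le> C" and \<gamma>: "0 \<le> \<gamma>" "\<gamma> < 1"
    and terms: "\<And>hs. length hs = l - 1 \<Longrightarrow>
      fock_weighted_le (- e1 * e2) (\<lambda>_. 1) (vac_term e1 e2 l hs c) ((C * \<gamma> ^ sum_list hs)\<^sup>2)"
    using vac_term_weighted_le[OF hb q c] by blast
  have "fock_weighted_le (- e1 * e2) (\<lambda>_. 1) c (1 * B)"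
    using q by (intro fock_weighted_le_reweight[OF hb c]) simp_all
  then have "in_fock (- e1 * e2) c"
    using hb by (intro in_fock_if_weighted_le) simp_all
  moreover have "fock_has_sum (- e1 * e2) (\<lambda>hs. vac_term e1 e2 l hs c) {hs. length hs = l - 1}
      (\<lambda>m. \<Sum>\<^sub>\<infinity>hs\<in>{hs. length hs = l - 1}. vac_term e1 e2 l hs c m)"
    using C \<gamma> terms
    by (intro fock_has_sum_if_norm_summable[OF hb, where b = "\<lambda>hs. C * \<gamma> ^ sum_list hs"]
        summable_on_cmult_right summable_on_power_sum_list) auto
  ultimately show ?thesis
    unfolding in_vac_domain_def by blast
qed

theorem proposition4p3:
  fixes e1 e2 :: real and vout vin :: "nat \<Rightarrow> complex"
  assumes "e2 < 0" and "0 < e1"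
    and "\<exists>U. open U \<and> sphere 0 1 \<subseteq> U \<and>
           (\<forall>w\<in>U. summable (\<lambda>k. vout (Suc k) * inverse w ^ Suc k / of_nat (Suc k)) \<and>
                   summable (\<lambda>k. vin (Suc k) * w ^ Suc k / of_nat (Suc k))) \<and>
           potential vout vin holomorphic_on U"
  shows "\<forall>l::nat. in_vac_domain e1 e2 l (stanley_cauchy (- e1 * e2) vin)"
proof
  fix l :: nat
  have hb: "0 < - e1 * e2"
    using assms(1,2) by (simp add: mult_pos_neg)
  obtain U where U: "open U" "sphere 0 1 \<subseteq> U"
    and summable_in: "\<And>w. w \<in> U \<Longrightarrow> summable (\<lambda>k. vin (Suc k) * w ^ Suc k / of_nat (Suc k))"
    using assms(3) by metis
  obtain R where R: "1 < R" "complex_of_real R \<in> U"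
    using exists_real_gt_one_in_open[OF U] by blast
  have "summable (\<lambda>k. (cmod (vin k))\<^sup>2 * R ^ k / real k)"
    by (rule summable_sq_coeffs_if_summable[OF R(1) summable_in[OF R(2)]])
  then have "fock_weighted_le (- e1 * e2) (\<lambda>m. R ^ grade m) (stanley_cauchy (- e1 * e2) vin)
      (exp ((\<Sum>k. (cmod (vin k))\<^sup>2 * R ^ k / real k) / (- e1 * e2)))"
    using R(1) by (intro fock_weighted_le_stanley_cauchy[OF hb]) simp_all
  then show "in_vac_domain e1 e2 l (stanley_cauchy (- e1 * e2) vin)"
    by (rule in_vac_domain_if_weighted_le[OF hb R(1)])
qed

end
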